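(* Let $(M,d)$ be a locally compact Hadamard space, $o\in M$, and $f:M\to\mathbb{R}$ a continuous convex function which is unbounded from below and decreases linearly. Let $\tilde f:M\to\mathbb{R}$ be a continuous convex function with $|f-\tilde f|$ bounded. Then $\tilde f$ is unbounded from below and decreases linearly, and $\gamma_{M,o,\tilde f}=\gamma_{M,o,f}$, $a_{M,o,\tilde f}=a_{M,o,f}$.
   Context: For $(M,o,f)$: $x_s$ is the unique minimizer of $f$ on the closed ball $B(o,s)$ and $\gamma_s$ the geodesic from $o$ to $x_s$; $f$ decreases linearly if $\liminf_{s\to\infty}f(x_s)/s<0$. The fastest shrinking geodesic $\gamma_{M,o,f}$ is the pointwise limit of $\gamma_s$ as $s\to\infty$, and the shrinking rate is $a_{M,o,f}=-\lim_{s\to\infty}\frac1s\min_{x\in B(o,s)}f(x)$. *)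

theory Defs
  imports "HOL-Analysis.Analysis"
begin

definition geodesic_seg :: "real \<Rightarrow> (real \<Rightarrow> 'a::metric_space) \<Rightarrow> bool" where
  "geodesic_seg L \<gamma> \<longleftrightarrow> L \<ge> 0 \<and> (\<forall>s\<in>{0..L}. \<forall>t\<in>{0..L}. dist (\<gamma> s) (\<gamma> t) = \<bar>s - t\<bar>)"

definition joins :: "(real \<Rightarrow> 'a::metric_space) \<Rightarrow> 'a \<Rightarrow> 'a \<Rightarrow> bool" where
  "joins \<gamma> x y \<longleftrightarrow> geodesic_seg (dist x y) \<gamma> \<and> \<gamma> 0 = x \<and> \<gamma> (dist x y) = y"

definition hadamard_space :: "'a::metric_space itself \<Rightarrow> bool" where
  "hadamard_space _ \<longleftrightarrow>
     complete (UNIV :: 'a set) \<and>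
     (\<forall>x y::'a. \<exists>\<gamma>. joins \<gamma> x y) \<and>
     (\<forall>x y z::'a. \<forall>\<gamma> t. joins \<gamma> x y \<and> 0 \<le> t \<and> t \<le> 1 \<longrightarrow>
        (dist z (\<gamma> (t * dist x y)))\<^sup>2
          \<le> (1 - t) * (dist z x)\<^sup>2 + t * (dist z y)\<^sup>2 - t * (1 - t) * (dist x y)\<^sup>2)"

definition locally_compact_space :: "'a::metric_space itself \<Rightarrow> bool" where
  "locally_compact_space _ \<longleftrightarrow> (\<forall>x::'a. \<exists>e>0. compact (cball x e))"

definition geod_convex :: "('a::metric_space \<Rightarrow> real) \<Rightarrow> bool" where
  "geod_convex f \<longleftrightarrow> (\<forall>x y \<gamma>. joins \<gamma> x y \<longrightarrow> convex_on {0..dist x y} (f \<circ> \<gamma>))"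

text \<open>Point at distance t (capped at d(x0,x)) from x0 on the geodesic from x0 to x
  (geodesics are unique in a Hadamard space).\<close>
definition geod_pt :: "'a::metric_space \<Rightarrow> 'a \<Rightarrow> real \<Rightarrow> 'a" where
  "geod_pt x0 x t = (THE p. dist x0 p = min t (dist x0 x) \<and> dist p x = dist x0 x - min t (dist x0 x))"

definition ball_min :: "('a::metric_space \<Rightarrow> real) \<Rightarrow> 'a \<Rightarrow> real \<Rightarrow> 'a" where
  "ball_min f x0 s = (THE x. x \<in> cball x0 s \<and> (\<forall>y\<in>cball x0 s. f x \<le> f y))"

definition gamma_s :: "('a::metric_space \<Rightarrow> real) \<Rightarrow> 'a \<Rightarrow> real \<Rightarrow> real \<Rightarrow> 'a" where
  "gamma_s f x0 s t = geod_pt x0 (ball_min f x0 s) t"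

definition decreases_linearly :: "('a::metric_space \<Rightarrow> real) \<Rightarrow> 'a \<Rightarrow> bool" where
  "decreases_linearly f x0 \<longleftrightarrow>
     Liminf at_top (\<lambda>s::real. ereal (f (ball_min f x0 s) / s)) < 0"

end

theory Submission
  imports Defs
begin

text \<open>The function \<open>h(s) = inf f\<close> over \<open>B(o,s)\<close> is convex and strictly decreasing, and \<open>h(s)/s\<close>
  tends to \<open>-a = sup (h(s) - h(0))/s\<close>.  When \<open>a > 0\<close>, \<open>h\<close> drops at rate at least \<open>a\<close> on every
  interval, so the CAT(0) inequality at midpoints makes \<open>f\<close> uniformly convex on \<open>B(o,s)\<close>:
  \<open>a d(u,v)\<^sup>2 \<le> 4 s (f u + f v - 2 h(s))\<close>.  This yields the unique minimizer \<open>x\<^sub>s\<close>, shows that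
  \<open>x\<^sub>s\<close> is \<open>o(s)\<close> away from the point of \<open>\<gamma>\<^sub>S\<close> at distance \<open>s\<close> (so \<open>\<gamma>\<^sub>s(t)\<close> is Cauchy by the CAT(0)
  comparison), and shows that the minimizers for \<open>f\<close> and for \<open>g\<close>, which both minimize \<open>f\<close> up to
  \<open>2C\<close>, are \<open>O(\<surd>s)\<close> apart, so that \<open>\<gamma>\<^sub>s(t)\<close> for \<open>f\<close> and \<open>g\<close> differ by \<open>O(t/\<surd>s)\<close>.  Since \<open>h\<close>
  changes by at most \<open>C\<close>, the rates agree.\<close>

section \<open>Geodesics in Hadamard spaces\<close>

lemma joins_dist:
  assumes "joins \<gamma> x y" "0 \<le> t" "t \<le> dist x y"
  shows "dist x (\<gamma> t) = t" "dist (\<gamma> t) y = dist x y - t"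
proof -
  have seg: "\<forall>s\<in>{0..dist x y}. \<forall>t\<in>{0..dist x y}. dist (\<gamma> s) (\<gamma> t) = \<bar>s - t\<bar>"
    and ends: "\<gamma> 0 = x" "\<gamma> (dist x y) = y"
    using assms(1) unfolding joins_def geodesic_seg_def by auto
  show "dist x (\<gamma> t) = t" using seg[rule_format, of 0 t] ends assms by auto
  show "dist (\<gamma> t) y = dist x y - t" using seg[rule_format, of t "dist x y"] ends assms by auto
qed

lemma hadamard_space_joins:
  assumes "hadamard_space TYPE('a::metric_space)"
  obtains \<gamma> where "joins \<gamma> (x::'a) y"
  using assms unfolding hadamard_space_def by blast

lemma hadamard_space_complete:
  assumes "hadamard_space TYPE('a::metric_space)"
  shows "complete (UNIV::'a set)"
  using assms unfolding hadamard_space_def by blast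

lemma hadamard_space_cat0:
  assumes "hadamard_space TYPE('a::metric_space)" "joins \<gamma> x y" "0 \<le> t" "t \<le> 1"
  shows "(dist (z::'a) (\<gamma> (t * dist x y)))\<^sup>2
          \<le> (1 - t) * (dist z x)\<^sup>2 + t * (dist z y)\<^sup>2 - t * (1 - t) * (dist x y)\<^sup>2"
  using assms unfolding hadamard_space_def by blast

text \<open>The CAT(0) inequality with \<open>z = p\<close> has right-hand side 0.\<close>
lemma hadamard_geodesic_point_unique:
  assumes H: "hadamard_space TYPE('a::metric_space)"
    and j: "joins \<gamma> x y" and \<tau>: "0 \<le> \<tau>" "\<tau> \<le> dist x y"
    and p: "dist x (p::'a) = \<tau>" "dist p y = dist x y - \<tau>"
  shows "p = \<gamma> \<tau>"
proof (cases "dist x y = 0")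
  case True
  then show ?thesis using \<tau> p j unfolding joins_def by auto
next
  case False
  define d where "d = dist x y"
  define l where "l = \<tau> / d"
  have l: "0 \<le> l" "l \<le> 1" "\<tau> = l * d" using \<tau> False by (auto simp: l_def d_def)
  have "(dist p (\<gamma> (l * d)))\<^sup>2 \<le> (1 - l) * (l * d)\<^sup>2 + l * ((1 - l) * d)\<^sup>2 - l * (1 - l) * d\<^sup>2"
    using hadamard_space_cat0[OF H j l(1,2), of p] p l(3)
    by (simp add: d_def dist_commute algebra_simps)
  also have "\<dots> = 0" by (simp add: power2_eq_square algebra_simps)
  finally show ?thesis using l(3) by simp
qed

lemma hadamard_geodesic_point_exists:
  assumes "hadamard_space TYPE('a::metric_space)" "0 \<le> t" "t \<le> 1"
  obtains p where "dist x (p::'a) = t * dist x y" "dist p y = (1 - t) * dist x y"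
proof -
  obtain \<gamma> where j: "joins \<gamma> x y" using hadamard_space_joins[OF assms(1)] .
  have "0 \<le> t * dist x y" "t * dist x y \<le> dist x y"
    using assms(2,3) by (auto simp: mult_left_le_one_le)
  from joins_dist[OF j this] show ?thesis
    by (intro that[of "\<gamma> (t * dist x y)"]) (auto simp: algebra_simps)
qed

lemma hadamard_geodesic_point_joins:
  assumes H: "hadamard_space TYPE('a::metric_space)" and "joins \<gamma> x y" "0 \<le> t" "t \<le> 1"
    and "dist x (p::'a) = t * dist x y" "dist p y = (1 - t) * dist x y"
  shows "p = \<gamma> (t * dist x y)"
  using assms by (intro hadamard_geodesic_point_unique[OF H])
    (auto simp: mult_left_le_one_le algebra_simps)

lemma hadamard_cat0_point:
  assumes H: "hadamard_space TYPE('a::metric_space)" and t: "0 \<le> t" "t \<le> 1"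
    and p: "dist x (p::'a) = t * dist x y" "dist p y = (1 - t) * dist x y"
  shows "(dist z p)\<^sup>2 \<le> (1 - t) * (dist z x)\<^sup>2 + t * (dist z y)\<^sup>2 - t * (1 - t) * (dist x y)\<^sup>2"
proof -
  obtain \<gamma> where j: "joins \<gamma> x y" using hadamard_space_joins[OF H] .
  show ?thesis
    using hadamard_space_cat0[OF H j t] hadamard_geodesic_point_joins[OF H j t p] by simp
qed

lemma geod_convex_point:
  assumes H: "hadamard_space TYPE('a::metric_space)" and "geod_convex f" and t: "0 \<le> t" "t \<le> 1"
    and p: "dist x (p::'a) = t * dist x y" "dist p y = (1 - t) * dist x y"
  shows "f p \<le> (1 - t) * f x + t * f y"
proof -
  obtain \<gamma> where j: "joins \<gamma> x y" using hadamard_space_joins[OF H] .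
  have "convex_on {0..dist x y} (f \<circ> \<gamma>)" using assms(2) j unfolding geod_convex_def by blast
  from convex_onD[OF this t, of 0 "dist x y"] show ?thesis
    using hadamard_geodesic_point_joins[OF H j t p] j unfolding joins_def by simp
qed

lemma hadamard_dist_convex:
  assumes H: "hadamard_space TYPE('a::metric_space)" and t: "0 \<le> t" "t \<le> 1"
    and p: "dist x (p::'a) = t * dist x y" "dist p y = (1 - t) * dist x y"
  shows "dist z p \<le> (1 - t) * dist z x + t * dist z y"
proof (rule power2_le_imp_le)
  have "\<bar>dist z x - dist z y\<bar> \<le> dist x y"
    by (metis abs_le_iff dist_commute dist_triangle_le diff_le_eq add.commute minus_diff_eq dist_triangle2)
  then have "(dist z x - dist z y)\<^sup>2 \<le> (dist x y)\<^sup>2"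
    by (metis abs_le_square_iff abs_of_nonneg zero_le_dist)
  then have "t * (1 - t) * (dist z x - dist z y)\<^sup>2 \<le> t * (1 - t) * (dist x y)\<^sup>2"
    using t by (intro mult_left_mono) auto
  with hadamard_cat0_point[OF H t p, of z]
  show "(dist z p)\<^sup>2 \<le> ((1 - t) * dist z x + t * dist z y)\<^sup>2"
    by (simp add: power2_eq_square algebra_simps)
  show "0 \<le> (1 - t) * dist z x + t * dist z y" using t by simp
qed

lemma hadamard_geodesic_contraction:
  assumes H: "hadamard_space TYPE('a::metric_space)" and l: "0 \<le> l" "l \<le> 1"
    and p: "dist w (p::'a) = l * dist w x" "dist p x = (1 - l) * dist w x"
    and q: "dist w (q::'a) = l * dist w y" "dist q y = (1 - l) * dist w y"
  shows "dist p q \<le> l * dist x y"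
proof (rule power2_le_imp_le)
  have "(dist x q)\<^sup>2 \<le> (1 - l) * (dist w x)\<^sup>2 + l * (dist x y)\<^sup>2 - l * (1 - l) * (dist w y)\<^sup>2"
    using hadamard_cat0_point[OF H l q, of x] by (simp add: dist_commute)
  then have "l * (dist q x)\<^sup>2
      \<le> l * ((1 - l) * (dist w x)\<^sup>2 + l * (dist x y)\<^sup>2 - l * (1 - l) * (dist w y)\<^sup>2)"
    using l by (intro mult_left_mono) (auto simp: dist_commute)
  with hadamard_cat0_point[OF H l p, of q] q(1)
  show "(dist p q)\<^sup>2 \<le> (l * dist x y)\<^sup>2"
    by (simp add: dist_commute power2_eq_square algebra_simps)
  show "0 \<le> l * dist x y" using l by simp
qed

lemma geod_pt_joins:
  assumes H: "hadamard_space TYPE('a::metric_space)" and j: "joins \<gamma> x0 x" and t: "0 \<le> t"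
  shows "geod_pt x0 (x::'a) t = \<gamma> (min t (dist x0 x))"
  unfolding geod_pt_def
proof (rule the_equality)
  have m: "0 \<le> min t (dist x0 x)" "min t (dist x0 x) \<le> dist x0 x" using t by auto
  show "dist x0 (\<gamma> (min t (dist x0 x))) = min t (dist x0 x) \<and>
      dist (\<gamma> (min t (dist x0 x))) x = dist x0 x - min t (dist x0 x)"
    using joins_dist[OF j m] by simp
  show "p = \<gamma> (min t (dist x0 x))"
    if "dist x0 p = min t (dist x0 x) \<and> dist p x = dist x0 x - min t (dist x0 x)" for p
    using hadamard_geodesic_point_unique[OF H j m] that by blast
qed

lemma geod_pt_dist:
  assumes H: "hadamard_space TYPE('a::metric_space)" and t: "0 \<le> t" "t \<le> dist x0 x"
  shows "dist x0 (geod_pt x0 (x::'a) t) = t" "dist (geod_pt x0 x t) x = dist x0 x - t"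
proof -
  obtain \<gamma> where j: "joins \<gamma> x0 x" using hadamard_space_joins[OF H] .
  show "dist x0 (geod_pt x0 x t) = t" "dist (geod_pt x0 x t) x = dist x0 x - t"
    using joins_dist[OF j t] geod_pt_joins[OF H j t(1)] t(2) by simp_all
qed

lemma geod_pt_geod_pt:
  assumes H: "hadamard_space TYPE('a::metric_space)" and "0 \<le> t" "t \<le> s" "s \<le> dist x0 x"
  shows "geod_pt x0 (geod_pt x0 (x::'a) s) t = geod_pt x0 x t"
proof -
  obtain \<gamma> where j: "joins \<gamma> x0 x" using hadamard_space_joins[OF H] .
  have ps: "geod_pt x0 x s = \<gamma> s" and pt: "geod_pt x0 x t = \<gamma> t"
    using geod_pt_joins[OF H j] assms by simp_all
  have ds: "dist x0 (\<gamma> s) = s" using joins_dist[OF j] assms by simp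
  have "joins \<gamma> x0 (\<gamma> s)"
    using j assms ds unfolding joins_def geodesic_seg_def by auto
  with geod_pt_joins[OF H this] assms ds show ?thesis unfolding ps pt by simp
qed

lemma geod_convex_geod_pt:
  assumes H: "hadamard_space TYPE('a::metric_space)" and "geod_convex f"
    and x: "dist x0 (x::'a) = s" "s > 0" and t: "0 \<le> t" "t \<le> s"
  shows "f (geod_pt x0 x t) \<le> (1 - t/s) * f x0 + (t/s) * f x"
proof (rule geod_convex_point[OF H assms(2)])
  show "0 \<le> t/s" "t/s \<le> 1" using x t by auto
  have "(1 - t/s) * s = s - t" using x by (simp add: field_simps)
  then show "dist x0 (geod_pt x0 x t) = t/s * dist x0 x"
    "dist (geod_pt x0 x t) x = (1 - t/s) * dist x0 x"
    using geod_pt_dist[OF H, of t x0 x] x t by simp_all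
qed

lemma dist_geod_pt_le:
  assumes H: "hadamard_space TYPE('a::metric_space)"
    and xy: "dist x0 (x::'a) = s" "dist x0 y = s" "s > 0" and t: "0 \<le> t" "t \<le> s"
  shows "dist (geod_pt x0 x t) (geod_pt x0 y t) \<le> t/s * dist x y"
proof (rule hadamard_geodesic_contraction[OF H])
  show "0 \<le> t/s" "t/s \<le> 1" using xy t by auto
  have "(1 - t/s) * s = s - t" using xy by (simp add: field_simps)
  show "dist x0 (geod_pt x0 x t) = t/s * dist x0 x"
    "dist (geod_pt x0 x t) x = (1 - t/s) * dist x0 x"
    "dist x0 (geod_pt x0 y t) = t/s * dist x0 y"
    "dist (geod_pt x0 y t) y = (1 - t/s) * dist x0 y"
    using geod_pt_dist[OF H, of t x0 x] geod_pt_dist[OF H, of t x0 y] xy t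
      \<open>(1 - t/s) * s = s - t\<close> by simp_all
qed

lemma tendsto_at_top_if_dist_bound:
  fixes g :: "real \<Rightarrow> 'a::metric_space"
  assumes comp: "complete (UNIV::'a set)" and e: "(e \<longlongrightarrow> 0) at_top"
    and bound: "\<And>s S. T \<le> s \<Longrightarrow> s \<le> S \<Longrightarrow> dist (g s) (g S) \<le> e s"
  obtains p where "(g \<longlongrightarrow> p) at_top"
proof -
  have small: "\<exists>N. \<forall>s\<ge>N. T \<le> s \<and> e s < \<epsilon>" if \<epsilon>: "\<epsilon> > 0" for \<epsilon>
  proof -
    obtain N where "\<And>s. N \<le> s \<Longrightarrow> e s < \<epsilon>"
      using order_tendstoD(2)[OF e \<epsilon>] unfolding eventually_at_top_linorder by blast
    then show ?thesis by (intro exI[of _ "max N T"]) auto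
  qed
  have "Cauchy (\<lambda>n. g (real n))"
  proof (rule metric_CauchyI)
    fix \<epsilon> :: real assume "\<epsilon> > 0"
    then obtain N where N: "\<And>s. N \<le> s \<Longrightarrow> T \<le> s \<and> e s < \<epsilon>" using small by blast
    obtain M :: nat where M: "N \<le> real M" using real_arch_simple by blast
    have close: "dist (g (real m)) (g (real n)) < \<epsilon>" if "M \<le> m" "m \<le> n" for m n
    proof -
      have "N \<le> real m" "real m \<le> real n" using M that by auto
      then show ?thesis using bound[of "real m" "real n"] N[of "real m"] by simp
    qed
    have "dist (g (real m)) (g (real n)) < \<epsilon>" if "M \<le> m" "M \<le> n" for m n
    proof (cases "m \<le> n")
      case False
      then show ?thesis using close[of n m] that by (simp add: dist_commute)
    qed (use close that in blast)
    then show "\<exists>M. \<forall>m\<ge>M. \<forall>n\<ge>M. dist (g (real m)) (g (real n)) < \<epsilon>" by blast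
  qed
  then obtain p where p: "(\<lambda>n. g (real n)) \<longlonglongrightarrow> p"
    using comp unfolding complete_def by blast
  have near: "dist (g s) p \<le> e s" if "T \<le> s" for s
  proof (rule tendsto_le[OF _ tendsto_const tendsto_dist[OF tendsto_const p]])
    obtain N :: nat where N: "s \<le> real N" using real_arch_simple by blast
    have "dist (g s) (g (real n)) \<le> e s" if "N \<le> n" for n
    proof (rule bound[OF \<open>T \<le> s\<close>])
      have "real N \<le> real n" using that by simp
      then show "s \<le> real n" using N by linarith
    qed
    then show "\<forall>\<^sub>F n in sequentially. dist (g s) (g (real n)) \<le> e s"
      unfolding eventually_sequentially by blast
  qed simp
  have "\<forall>\<^sub>F s in at_top. dist (g s) p \<le> e s"
    unfolding eventually_at_top_linorder using near by blast
  then have "((\<lambda>s. dist (g s) p) \<longlongrightarrow> 0) at_top"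
    by (intro tendsto_sandwich[OF _ _ tendsto_const e]) simp_all
  then show ?thesis using tendsto_dist_iff that by blast
qed

section \<open>Infima of a convex function over balls\<close>

locale convex_unbounded =
  fixes f :: "'a::metric_space \<Rightarrow> real" and x0 :: 'a
  assumes hadamard: "hadamard_space TYPE('a)"
    and cont: "continuous_on UNIV f" and convex: "geod_convex f"
    and unbounded: "\<not> bdd_below (range f)"
begin

definition ball_inf :: "real \<Rightarrow> real" where
  "ball_inf s = (INF x\<in>cball x0 s. f x)"

text \<open>Convexity transports the bound \<open>f > f x0 - 1\<close> from a small ball around \<open>x0\<close> to the
  whole space.\<close>
lemma lower_linear_bound: obtains K where "\<And>y. f x0 - 1 - K * dist x0 y \<le> f y"
proof -
  obtain d where d: "d > 0" "\<And>y. dist y x0 < d \<Longrightarrow> dist (f y) (f x0) < 1"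
    using cont unfolding continuous_on_iff by (meson UNIV_I zero_less_one)
  have "f x0 - 1 - (2/d) * dist x0 y \<le> f y" for y
  proof (cases "dist x0 y < d")
    case True
    then have "dist (f y) (f x0) < 1" using d(2)[of y] by (simp add: dist_commute)
    moreover have "0 \<le> (2/d) * dist x0 y" using d by simp
    ultimately show ?thesis unfolding dist_real_def by linarith
  next
    case False
    define t where "t = (d/2) / dist x0 y"
    have "d \<le> dist x0 y" using False by simp
    then have t: "0 < t" "t \<le> 1" using d by (auto simp: t_def divide_simps)
    obtain p where p: "dist x0 p = t * dist x0 y" "dist p y = (1 - t) * dist x0 y"
      using hadamard_geodesic_point_exists[OF hadamard, of t] t by auto
    have "dist x0 y > 0" using \<open>d \<le> dist x0 y\<close> d by linarith
    then have "dist x0 p = d/2" using p by (simp add: t_def)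
    then have "f x0 - 1 < f p" using d(2)[of p] d(1) by (simp add: dist_commute dist_real_def)
    also have "f p \<le> (1 - t) * f x0 + t * f y"
      using geod_convex_point[OF hadamard convex _ _ p] t by simp
    finally have "f x0 - f y < 1 / t" using t by (simp add: field_simps)
    also have "1 / t = (2/d) * dist x0 y" using d False by (simp add: t_def)
    finally show ?thesis by simp
  qed
  then show ?thesis by (rule that)
qed

lemma bdd_below_ball: "bdd_below (f ` cball x0 s)"
proof -
  obtain K where K: "\<And>y. f x0 - 1 - K * dist x0 y \<le> f y" using lower_linear_bound by blast
  have "f x0 - 1 - \<bar>K\<bar> * s \<le> f y" if "y \<in> cball x0 s" for y
  proof -
    have "K * dist x0 y \<le> \<bar>K\<bar> * dist x0 y" by (simp add: mult_right_mono)
    also have "\<dots> \<le> \<bar>K\<bar> * s" using that by (simp add: mult_left_mono)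
    finally have "K * dist x0 y \<le> \<bar>K\<bar> * s" .
    then show ?thesis using K[of y] by linarith
  qed
  then show ?thesis by (intro bdd_belowI2) auto
qed

lemma ball_inf_le: "y \<in> cball x0 s \<Longrightarrow> ball_inf s \<le> f y"
  unfolding ball_inf_def by (rule cINF_lower[OF bdd_below_ball])

lemma ball_inf_greatest: "0 \<le> s \<Longrightarrow> (\<And>y. y \<in> cball x0 s \<Longrightarrow> c \<le> f y) \<Longrightarrow> c \<le> ball_inf s"
  unfolding ball_inf_def by (rule cINF_greatest) auto

lemma ball_inf_approx:
  assumes "0 \<le> s" "e > 0" obtains y where "y \<in> cball x0 s" "f y < ball_inf s + e"
  using ball_inf_greatest[OF assms(1), of "ball_inf s + e"] assms(2) by force

lemma ball_inf_0: "ball_inf 0 = f x0"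
  unfolding ball_inf_def by simp

lemma ball_inf_antimono: "0 \<le> r \<Longrightarrow> r \<le> s \<Longrightarrow> ball_inf s \<le> ball_inf r"
  by (rule ball_inf_greatest) (auto intro: ball_inf_le)

text \<open>A point of the geodesic between near-minimizers on \<open>B(x0,a)\<close> and \<open>B(x0,b)\<close> lies in
  \<open>B(x0, (1-t) a + t b)\<close> by convexity of the distance.\<close>
lemma ball_inf_convex:
  assumes "0 \<le> a" "0 \<le> b" and t: "0 \<le> t" "t \<le> 1"
  shows "ball_inf ((1-t)*a + t*b) \<le> (1-t) * ball_inf a + t * ball_inf b"
proof (rule field_le_epsilon)
  fix e :: real assume e: "e > 0"
  obtain x where x: "x \<in> cball x0 a" "f x < ball_inf a + e" using ball_inf_approx assms(1) e .
  obtain y where y: "y \<in> cball x0 b" "f y < ball_inf b + e" using ball_inf_approx assms(2) e .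
  obtain p where p: "dist x p = t * dist x y" "dist p y = (1 - t) * dist x y"
    using hadamard_geodesic_point_exists[OF hadamard t] .
  have "dist x0 p \<le> (1-t) * dist x0 x + t * dist x0 y" by (rule hadamard_dist_convex[OF hadamard t p])
  also have "\<dots> \<le> (1-t)*a + t*b" using x y t by (intro add_mono mult_left_mono) auto
  finally have "ball_inf ((1-t)*a + t*b) \<le> f p" by (intro ball_inf_le) simp
  also have "f p \<le> (1 - t) * f x + t * f y" by (rule geod_convex_point[OF hadamard convex t p])
  also have "\<dots> \<le> (1-t) * (ball_inf a + e) + t * (ball_inf b + e)"
    using x y t by (intro add_mono mult_left_mono) auto
  finally show "ball_inf ((1-t)*a + t*b) \<le> (1-t) * ball_inf a + t * ball_inf b + e"
    by (simp add: algebra_simps)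
qed

lemma ball_inf_slopes:
  assumes "0 \<le> r" "r < s" "s < u"
  shows "(ball_inf s - ball_inf r) * (u - s) \<le> (ball_inf u - ball_inf s) * (s - r)"
proof -
  define t where "t = (s - r) / (u - r)"
  have t: "0 \<le> t" "t \<le> 1" "t * (u - r) = s - r" using assms by (auto simp: t_def)
  then have "s = (1-t)*r + t*u" by (simp add: algebra_simps)
  then have "ball_inf s \<le> (1-t) * ball_inf r + t * ball_inf u"
    using ball_inf_convex[of r u t] assms t by simp
  then have "(u - r) * ball_inf s \<le> (u - r) * ((1-t) * ball_inf r + t * ball_inf u)"
    using assms by (intro mult_left_mono) auto
  also have "\<dots> = ((u - r) - t * (u - r)) * ball_inf r + (t * (u - r)) * ball_inf u"
    by (simp add: algebra_simps)
  also have "\<dots> = (u - s) * ball_inf r + (s - r) * ball_inf u"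
    using t(3) by simp
  finally show ?thesis by (simp add: algebra_simps)
qed

text \<open>A convex function of \<open>s\<close> that is constant on some interval is non-decreasing beyond it,
  which the unboundedness of \<open>f\<close> forbids.\<close>
lemma ball_inf_strict_antimono:
  assumes "0 \<le> r" "r < s" shows "ball_inf s < ball_inf r"
proof (rule ccontr)
  assume "\<not> ?thesis"
  then have eq: "ball_inf s = ball_inf r" using ball_inf_antimono[of r s] assms by simp
  have flat: "ball_inf s \<le> ball_inf u" if "u \<ge> 0" for u
  proof (cases "u \<le> s")
    case True then show ?thesis using ball_inf_antimono[of u s] that by simp
  next
    case False
    then have "0 \<le> (ball_inf u - ball_inf s) * (s - r)"
      using ball_inf_slopes[of r s u] assms eq by simp
    then show ?thesis using assms by (simp add: zero_le_mult_iff)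
  qed
  obtain y where "f y < ball_inf s" using unbounded by (meson bdd_belowI2 not_le rangeI)
  moreover have "ball_inf (dist x0 y) \<le> f y" by (rule ball_inf_le) simp
  ultimately show False using flat[of "dist x0 y"] by simp
qed

lemma ball_inf_steep:
  assumes "s > 0" obtains a where "a > 0" "\<And>r. 0 \<le> r \<Longrightarrow> r \<le> s \<Longrightarrow> ball_inf s + a * (s - r) \<le> ball_inf r"
proof
  show "ball_inf s - ball_inf (s+1) > 0" using ball_inf_strict_antimono[of s "s+1"] assms by simp
  show "ball_inf s + (ball_inf s - ball_inf (s+1)) * (s - r) \<le> ball_inf r" if "0 \<le> r" "r \<le> s" for r
    using ball_inf_slopes[of r s "s+1"] that by (cases "r = s") (auto simp: algebra_simps)
qed

text \<open>By the CAT(0) inequality the midpoint \<open>m\<close> of \<open>u, v\<close> satisfies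
  \<open>d(x0,m)\<^sup>2 \<le> s\<^sup>2 - d(u,v)\<^sup>2/4\<close>, so it lies in a ball of radius \<open>r\<close> with \<open>s - r \<ge> d(u,v)\<^sup>2 / 8s\<close>,
  and there \<open>f\<close> is at least \<open>ball_inf s + a (s - r)\<close>.\<close>
lemma dist_sq_le_excess:
  assumes s: "s > 0" and a: "a > 0"
    and steep: "\<And>r. 0 \<le> r \<Longrightarrow> r \<le> s \<Longrightarrow> ball_inf s + a * (s - r) \<le> ball_inf r"
    and u: "u \<in> cball x0 s" and v: "v \<in> cball x0 s"
  shows "a * (dist u v)\<^sup>2 \<le> 4 * s * (f u + f v - 2 * ball_inf s)"
proof -
  obtain m where m: "dist u m = (1/2) * dist u v" "dist m v = (1 - 1/2) * dist u v"
    using hadamard_geodesic_point_exists[OF hadamard, of "1/2"] by auto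
  define D where "D = dist u v"
  define r where "r = dist x0 m"
  have "r\<^sup>2 \<le> (dist x0 u)\<^sup>2 / 2 + (dist x0 v)\<^sup>2 / 2 - D\<^sup>2 / 4"
    using hadamard_cat0_point[OF hadamard _ _ m, of x0]
    by (simp add: r_def D_def power2_eq_square algebra_simps)
  also have "\<dots> \<le> s\<^sup>2 / 2 + s\<^sup>2 / 2 - D\<^sup>2 / 4"
    using u v power_mono[of "dist x0 u" s 2] power_mono[of "dist x0 v" s 2] by simp
  finally have r2: "r\<^sup>2 \<le> s\<^sup>2 - D\<^sup>2/4" by simp
  have "0 \<le> D\<^sup>2/4" by simp
  then have "r\<^sup>2 \<le> s\<^sup>2" using r2 by linarith
  then have r: "0 \<le> r" "r \<le> s" using s by (auto simp: r_def intro: power2_le_imp_le)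
  have "ball_inf s + a * (s - r) \<le> ball_inf r" using steep r by blast
  also have "ball_inf r \<le> f m" by (rule ball_inf_le) (simp add: r_def)
  also have "f m \<le> (1 - 1/2) * f u + (1/2) * f v" by (rule geod_convex_point[OF hadamard convex _ _ m]) auto
  finally have excess: "a * (s - r) \<le> (f u + f v)/2 - ball_inf s" by (simp add: field_simps)
  have "D\<^sup>2 / 4 \<le> (s - r) * (s + r)" using r2 by (simp add: power2_eq_square algebra_simps)
  also have "\<dots> \<le> (s - r) * (2 * s)" using r by (intro mult_left_mono) auto
  finally have "D\<^sup>2 \<le> 8 * s * (s - r)" by (simp add: algebra_simps)
  then have "a * D\<^sup>2 \<le> 8 * s * (a * (s - r))" using a by (simp add: mult_left_mono)
  also have "\<dots> \<le> 8 * s * ((f u + f v)/2 - ball_inf s)" using excess s by (intro mult_left_mono) auto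
  finally show ?thesis by (simp add: D_def algebra_simps)
qed

text \<open>Minimizing sequences are Cauchy by \<open>dist_sq_le_excess\<close>; completeness (rather than local
  compactness) provides the limit.\<close>
lemma ball_inf_attained:
  assumes "0 \<le> s" obtains x where "x \<in> cball x0 s" "f x = ball_inf s"
proof (cases "s = 0")
  case True then show ?thesis using ball_inf_0 by (intro that[of x0]) auto
next
  case False
  then have s: "s > 0" using assms by simp
  obtain a where a: "a > 0" and steep: "\<And>r. 0 \<le> r \<Longrightarrow> r \<le> s \<Longrightarrow> ball_inf s + a * (s - r) \<le> ball_inf r"
    using ball_inf_steep[OF s] by blast
  define \<delta> :: "nat \<Rightarrow> real" where "\<delta> n = inverse (real (Suc n))" for n
  have "\<exists>y\<in>cball x0 s. f y < ball_inf s + \<delta> n" for n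
    by (rule ball_inf_approx[OF assms, of "\<delta> n"]) (auto simp: \<delta>_def)
  then obtain z where z: "\<And>n. z n \<in> cball x0 s" "\<And>n. f (z n) < ball_inf s + \<delta> n"
    by metis
  have "Cauchy z"
  proof (rule metric_CauchyI)
    fix e :: real assume e: "e > 0"
    obtain N where "8 * s / (a * e\<^sup>2) < real N" using reals_Archimedean2 by blast
    moreover have "0 < a * e\<^sup>2" using a e by simp
    ultimately have N: "8 * s * \<delta> N < a * e\<^sup>2" by (simp add: \<delta>_def field_simps)
    have "dist (z m) (z n) < e" if "m \<ge> N" "n \<ge> N" for m n
    proof -
      have "\<delta> m \<le> \<delta> N" "\<delta> n \<le> \<delta> N" using that by (simp_all add: \<delta>_def field_simps)
      then have "f (z m) + f (z n) - 2 * ball_inf s < 2 * \<delta> N"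
        using z(2)[of m] z(2)[of n] by linarith
      then have "4 * s * (f (z m) + f (z n) - 2 * ball_inf s) < 4 * s * (2 * \<delta> N)"
        using s by (intro mult_strict_left_mono) auto
      then have "a * (dist (z m) (z n))\<^sup>2 < a * e\<^sup>2"
        using dist_sq_le_excess[OF s a steep z(1) z(1), of m n] N by linarith
      then show ?thesis using a e by (simp add: power_less_imp_less_base)
    qed
    then show "\<exists>M. \<forall>m\<ge>M. \<forall>n\<ge>M. dist (z m) (z n) < e" by blast
  qed
  then obtain l where l: "z \<longlonglongrightarrow> l"
    using hadamard_space_complete[OF hadamard] unfolding complete_def by blast
  have "l \<in> cball x0 s"
    using closed_sequential_limits[THEN iffD1, OF closed_cball] z(1) l by blast
  moreover have "(\<lambda>n. f (z n)) \<longlonglongrightarrow> f l"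
    using cont l by (simp add: continuous_on_eq_continuous_at isCont_tendsto_compose)
  moreover have "(\<lambda>n. f (z n)) \<longlonglongrightarrow> ball_inf s"
  proof (rule tendsto_sandwich[OF _ _ tendsto_const])
    show "(\<lambda>n. ball_inf s + \<delta> n) \<longlonglongrightarrow> ball_inf s"
      unfolding \<delta>_def by (rule LIMSEQ_inverse_real_of_nat_add)
    show "\<forall>\<^sub>F n in sequentially. ball_inf s \<le> f (z n)" using ball_inf_le[OF z(1)] by simp
    show "\<forall>\<^sub>F n in sequentially. f (z n) \<le> ball_inf s + \<delta> n" using z(2) by (simp add: less_imp_le)
  qed
  ultimately show ?thesis using LIMSEQ_unique that by blast
qed

lemma ball_inf_minimizer_unique:
  assumes "0 \<le> s" "u \<in> cball x0 s" "v \<in> cball x0 s" "f u = ball_inf s" "f v = ball_inf s"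
  shows "u = v"
proof (cases "s = 0")
  case False
  then have s: "s > 0" using assms by simp
  obtain a where a: "a > 0" and steep: "\<And>r. 0 \<le> r \<Longrightarrow> r \<le> s \<Longrightarrow> ball_inf s + a * (s - r) \<le> ball_inf r"
    using ball_inf_steep[OF s] by blast
  have "a * (dist u v)\<^sup>2 \<le> 0"
    using dist_sq_le_excess[OF s a steep assms(2,3)] assms(4,5) by simp
  then show ?thesis using a by (simp add: mult_le_0_iff)
qed (use assms in auto)

lemma ball_min:
  assumes "0 \<le> s"
  shows "ball_min f x0 s \<in> cball x0 s" "f (ball_min f x0 s) = ball_inf s"
proof -
  obtain x where x: "x \<in> cball x0 s" "f x = ball_inf s" using ball_inf_attained[OF assms] .
  have "ball_min f x0 s = x" unfolding ball_min_def
  proof (rule the_equality)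
    show "x \<in> cball x0 s \<and> (\<forall>y\<in>cball x0 s. f x \<le> f y)" using x ball_inf_le by auto
  next
    fix y assume y: "y \<in> cball x0 s \<and> (\<forall>y'\<in>cball x0 s. f y \<le> f y')"
    then have "f y = ball_inf s" using x ball_inf_le[of y s] by (metis order_antisym)
    then show "y = x" using ball_inf_minimizer_unique[OF assms _ x(1) _ x(2)] y by blast
  qed
  then show "ball_min f x0 s \<in> cball x0 s" "f (ball_min f x0 s) = ball_inf s" using x by auto
qed

lemma dist_ball_min:
  assumes "0 \<le> s" shows "dist x0 (ball_min f x0 s) = s"
proof (rule ccontr)
  assume "dist x0 (ball_min f x0 s) \<noteq> s"
  then have "dist x0 (ball_min f x0 s) < s" using ball_min(1)[OF assms] by simp
  then have "ball_inf s < ball_inf (dist x0 (ball_min f x0 s))"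
    using ball_inf_strict_antimono by simp
  also have "\<dots> \<le> f (ball_min f x0 s)" by (rule ball_inf_le) simp
  finally show False using ball_min(2)[OF assms] by simp
qed

definition chord_slope :: "real \<Rightarrow> real" where
  "chord_slope s = (ball_inf s - ball_inf 0) / s"

text \<open>The shrinking rate \<open>a\<^sub>M\<^sub>,\<^sub>o\<^sub>,\<^sub>f\<close> of the paper is \<open>- rate\<close>.\<close>
definition rate :: real where
  "rate = (SUP s\<in>{0<..}. chord_slope s)"

lemma chord_slope_mono: assumes "0 < s" "s \<le> S" shows "chord_slope s \<le> chord_slope S"
proof (cases "s = S")
  case False
  then have "(ball_inf s - ball_inf 0) * (S - s) \<le> (ball_inf S - ball_inf s) * s"
    using ball_inf_slopes[of 0 s S] assms by simp
  then have "(ball_inf s - ball_inf 0) * S \<le> (ball_inf S - ball_inf 0) * s" by (simp add: algebra_simps)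
  then show ?thesis using assms unfolding chord_slope_def by (simp add: divide_simps mult.commute)
qed simp

lemma bdd_above_chord_slope: "bdd_above (chord_slope ` {0<..})"
proof (rule bdd_aboveI2)
  show "chord_slope s \<le> 0" if "s \<in> {0<..}" for s
    using that ball_inf_antimono[of 0 s] by (simp add: chord_slope_def divide_nonpos_pos)
qed

lemma chord_slope_le_rate: "0 < s \<Longrightarrow> chord_slope s \<le> rate"
  unfolding rate_def by (rule cSUP_upper[OF _ bdd_above_chord_slope]) simp

lemma chord_slope_tendsto_rate: "(chord_slope \<longlongrightarrow> rate) at_top"
proof (rule order_tendstoI)
  fix c assume "c < rate"
  then obtain s0 where "s0 > 0" "c < chord_slope s0"
    unfolding rate_def using less_cSUP_iff[OF _ bdd_above_chord_slope] by force
  then show "\<forall>\<^sub>F s in at_top. c < chord_slope s"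
    unfolding eventually_at_top_linorder using chord_slope_mono
    by (intro exI[of _ s0]) (auto intro: less_le_trans)
next
  fix c assume "rate < c"
  have "chord_slope s < c" if "1 \<le> s" for s
    using chord_slope_le_rate[of s] that \<open>rate < c\<close> by simp
  then show "\<forall>\<^sub>F s in at_top. chord_slope s < c"
    unfolding eventually_at_top_linorder by blast
qed

lemma ball_inf_div_tendsto_rate: "((\<lambda>s. ball_inf s / s) \<longlongrightarrow> rate) at_top"
proof -
  have "((\<lambda>s. chord_slope s + ball_inf 0 * inverse s) \<longlongrightarrow> rate + 0) at_top"
    by (intro tendsto_add chord_slope_tendsto_rate tendsto_mult_right_zero
        tendsto_inverse_0_at_top filterlim_ident)
  moreover have "\<forall>\<^sub>F s in at_top. chord_slope s + ball_inf 0 * inverse s = ball_inf s / s"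
    unfolding eventually_at_top_linorder
    by (intro exI[of _ 1]) (auto simp: chord_slope_def field_simps)
  ultimately show ?thesis using tendsto_cong by fastforce
qed

text \<open>A steeper chord over \<open>[r, s]\<close> would, by convexity, force \<open>chord_slope S > rate\<close> for
  large \<open>S\<close>.\<close>
lemma ball_inf_diff_le_rate:
  assumes "0 \<le> r" "r \<le> s" shows "ball_inf s - ball_inf r \<le> rate * (s - r)"
proof (rule ccontr)
  assume contra: "\<not> ?thesis"
  then have rs: "r < s" using assms by (cases "r = s") auto
  define \<delta> where "\<delta> = (ball_inf s - ball_inf r) - rate * (s - r)"
  have \<delta>: "\<delta> > 0" using contra by (simp add: \<delta>_def)
  have s: "s > 0" using assms rs by simp
  define K where "K = s * (rate - chord_slope s) * (s - r)"
  have "K \<ge> 0" using chord_slope_le_rate[OF s] rs s by (simp add: K_def)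
  define S where "S = s + (K / \<delta> + 1)"
  have "0 \<le> K / \<delta>" using \<open>K \<ge> 0\<close> \<delta> by simp
  then have S: "S > s" by (simp add: S_def)
  have "(ball_inf S - ball_inf s) * (s - r)
      \<le> (rate * S - chord_slope s * s) * (s - r)"
  proof (rule mult_right_mono)
    have "ball_inf S - ball_inf 0 \<le> rate * S"
      using chord_slope_le_rate[of S] S s by (simp add: chord_slope_def divide_simps mult.commute)
    then show "ball_inf S - ball_inf s \<le> rate * S - chord_slope s * s"
      using s by (simp add: chord_slope_def)
  qed (use rs in simp)
  with ball_inf_slopes[OF assms(1) rs S]
  have "(rate * (s - r) + \<delta>) * (S - s) \<le> (rate * S - chord_slope s * s) * (s - r)"
    by (simp add: \<delta>_def)
  then have "\<delta> * (S - s) \<le> K" by (simp add: K_def algebra_simps)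
  also have "\<delta> * (S - s) = K + \<delta>" using \<delta> by (simp add: S_def field_simps)
  finally show False using \<delta> by simp
qed

lemma decreases_linearly_iff: "decreases_linearly f x0 \<longleftrightarrow> rate < 0"
proof -
  have "Liminf at_top (\<lambda>s. ereal (f (ball_min f x0 s) / s)) = Liminf at_top (\<lambda>s. ereal (ball_inf s / s))"
    by (rule Liminf_eq) (auto simp: eventually_at_top_linorder ball_min intro!: exI[of _ 0])
  also have "\<dots> = ereal rate"
    by (rule lim_imp_Liminf) (auto intro: tendsto_ereal ball_inf_div_tendsto_rate)
  finally show ?thesis unfolding decreases_linearly_def by simp
qed

lemma ball_inf_steep_rate:
  "0 \<le> r \<Longrightarrow> r \<le> s \<Longrightarrow> ball_inf s + (- rate) * (s - r) \<le> ball_inf r"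
  using ball_inf_diff_le_rate by (simp add: algebra_simps)

lemma geod_pt_ball_min_excess:
  assumes "0 < s" "s \<le> S"
  shows "f (geod_pt x0 (ball_min f x0 S) s) - ball_inf s \<le> s * (rate - chord_slope s)"
proof -
  have S: "S > 0" "0 \<le> S" using assms by auto
  have "f (geod_pt x0 (ball_min f x0 S) s) \<le> (1 - s/S) * f x0 + (s/S) * f (ball_min f x0 S)"
    using geod_convex_geod_pt[OF hadamard convex dist_ball_min[OF S(2)] S(1)] assms by simp
  also have "\<dots> = ball_inf 0 + s * chord_slope S"
    using ball_min(2)[OF S(2)] ball_inf_0 S by (simp add: chord_slope_def field_simps)
  also have "\<dots> \<le> ball_inf 0 + s * rate"
    using chord_slope_le_rate[OF S(1)] assms by (simp add: mult_left_mono)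
  moreover have "ball_inf s = ball_inf 0 + s * chord_slope s"
    using assms by (simp add: chord_slope_def)
  ultimately show ?thesis by (simp add: algebra_simps)
qed

text \<open>By strong convexity; the bound is \<open>o(s)\<close> because \<open>chord_slope s \<rightarrow> rate\<close>.\<close>
lemma dist_ball_min_geod_pt:
  assumes neg: "rate < 0" and s: "0 < s" "s \<le> S"
  shows "dist (ball_min f x0 s) (geod_pt x0 (ball_min f x0 S) s)
    \<le> 2 * s * sqrt ((rate - chord_slope s) / (- rate))"
proof -
  define y where "y = geod_pt x0 (ball_min f x0 S) s"
  define D where "D = dist (ball_min f x0 s) y"
  have "y \<in> cball x0 s"
    using geod_pt_dist(1)[OF hadamard, of s x0 "ball_min f x0 S"] dist_ball_min[of S] s
    by (simp add: y_def)
  then have "(- rate) * D\<^sup>2 \<le> 4 * s * (f (ball_min f x0 s) + f y - 2 * ball_inf s)"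
    unfolding D_def using ball_min(1)[of s] s
    by (intro dist_sq_le_excess ball_inf_steep_rate) (use neg in auto)
  also have "\<dots> \<le> 4 * s * (s * (rate - chord_slope s))"
    using geod_pt_ball_min_excess[OF s] ball_min(2)[of s] s
    by (intro mult_left_mono) (auto simp: y_def)
  finally have "D\<^sup>2 \<le> (2 * s)\<^sup>2 * ((rate - chord_slope s) / (- rate))"
    using neg by (simp add: field_simps power2_eq_square)
  then have "D \<le> sqrt ((2 * s)\<^sup>2 * ((rate - chord_slope s) / (- rate)))"
    by (rule real_le_rsqrt)
  also have "\<dots> = 2 * s * sqrt ((rate - chord_slope s) / (- rate))"
    by (simp only: real_sqrt_mult real_sqrt_abs) (use s in simp)
  finally show ?thesis by (simp add: D_def y_def)
qed

lemma gamma_s_dist_le: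
  assumes neg: "rate < 0" and t: "0 \<le> t" "t \<le> s" "s \<le> S" and s: "0 < s"
  shows "dist (gamma_s f x0 s t) (gamma_s f x0 S t) \<le> 2 * t * sqrt ((rate - chord_slope s) / (- rate))"
proof -
  have S: "0 \<le> S" using t by simp
  have "gamma_s f x0 S t = geod_pt x0 (geod_pt x0 (ball_min f x0 S) s) t"
    unfolding gamma_s_def using geod_pt_geod_pt[OF hadamard t(1,2)] dist_ball_min[OF S] t(3) by simp
  moreover have "dist x0 (geod_pt x0 (ball_min f x0 S) s) = s"
    using geod_pt_dist(1)[OF hadamard] dist_ball_min[OF S] t s by simp
  ultimately have "dist (gamma_s f x0 s t) (gamma_s f x0 S t)
      \<le> t/s * dist (ball_min f x0 s) (geod_pt x0 (ball_min f x0 S) s)"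
    unfolding gamma_s_def using dist_geod_pt_le[OF hadamard dist_ball_min] s t(1,2) by simp
  also have "\<dots> \<le> t/s * (2 * s * sqrt ((rate - chord_slope s) / (- rate)))"
    using dist_ball_min_geod_pt[OF neg s t(3)] t s by (intro mult_left_mono) auto
  finally show ?thesis using s by simp
qed

lemma gamma_s_convergent:
  assumes neg: "rate < 0" and t: "0 \<le> t"
  obtains p where "((\<lambda>s. gamma_s f x0 s t) \<longlongrightarrow> p) at_top"
proof (rule tendsto_at_top_if_dist_bound[OF hadamard_space_complete[OF hadamard]])
  have "((\<lambda>s. 2 * t * sqrt ((rate - chord_slope s) / (- rate)))
      \<longlongrightarrow> 2 * t * sqrt ((rate - rate) / (- rate))) at_top"
    by (intro tendsto_intros chord_slope_tendsto_rate) (use neg in simp)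
  then show "((\<lambda>s. 2 * t * sqrt ((rate - chord_slope s) / (- rate))) \<longlongrightarrow> 0) at_top"
    by simp
  show "dist (gamma_s f x0 s t) (gamma_s f x0 S t) \<le> 2 * t * sqrt ((rate - chord_slope s) / (- rate))"
    if "t + 1 \<le> s" "s \<le> S" for s S
    using gamma_s_dist_le[OF neg] that t by simp
qed

end

section \<open>Bounded perturbations\<close>

lemma not_bdd_below_bounded_diff:
  fixes f g :: "'a \<Rightarrow> real"
  assumes "\<not> bdd_below (range f)" "\<And>x. \<bar>f x - g x\<bar> \<le> C"
  shows "\<not> bdd_below (range g)"
proof
  assume "bdd_below (range g)"
  then obtain m where m: "\<And>x. m \<le> g x" by (meson bdd_below.E rangeI)
  have "m - C \<le> f x" for x using m[of x] assms(2)[of x] unfolding abs_le_iff by linarith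
  then show False using assms(1) by (meson bdd_belowI2)
qed

lemma tendsto_div_unique_bounded_diff:
  fixes u v :: "real \<Rightarrow> real"
  assumes "((\<lambda>s. u s / s) \<longlongrightarrow> a) at_top" "((\<lambda>s. v s / s) \<longlongrightarrow> b) at_top"
    and "\<And>s. 0 \<le> s \<Longrightarrow> \<bar>u s - v s\<bar> \<le> C"
  shows "a = b"
proof -
  have "((\<lambda>s. C / s) \<longlongrightarrow> 0) at_top"
    by (intro tendsto_divide_0[OF tendsto_const] filterlim_at_top_imp_at_infinity filterlim_ident)
  moreover have "\<forall>\<^sub>F s in at_top. norm (u s / s - v s / s) \<le> C / s"
    unfolding eventually_at_top_linorder using assms(3)
    by (intro exI[of _ 1]) (auto simp: diff_divide_distrib[symmetric] divide_right_mono)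
  ultimately have "((\<lambda>s. u s / s - v s / s) \<longlongrightarrow> 0) at_top"
    by (rule Lim_null_comparison[rotated])
  moreover have "((\<lambda>s. u s / s - v s / s) \<longlongrightarrow> a - b) at_top"
    by (intro tendsto_diff assms(1,2))
  ultimately have "a - b = 0" using tendsto_unique[OF trivial_limit_at_top_linorder] by blast
  then show ?thesis by simp
qed

locale bounded_perturbation =
  F: convex_unbounded f x0 + G: convex_unbounded g x0
  for f g :: "'a::metric_space \<Rightarrow> real" and x0 :: 'a +
  fixes C :: real
  assumes bounded_diff: "\<And>x. \<bar>f x - g x\<bar> \<le> C"
begin

lemma ball_inf_bounded_diff:
  assumes "0 \<le> s" shows "\<bar>F.ball_inf s - G.ball_inf s\<bar> \<le> C"
proof -
  have "G.ball_inf s - C \<le> F.ball_inf s"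
  proof (rule F.ball_inf_greatest[OF assms])
    show "G.ball_inf s - C \<le> f y" if "y \<in> cball x0 s" for y
      using G.ball_inf_le[OF that] bounded_diff[of y] by (simp add: abs_le_iff)
  qed
  moreover have "F.ball_inf s - C \<le> G.ball_inf s"
  proof (rule G.ball_inf_greatest[OF assms])
    show "F.ball_inf s - C \<le> g y" if "y \<in> cball x0 s" for y
      using F.ball_inf_le[OF that] bounded_diff[of y] by (simp add: abs_le_iff)
  qed
  ultimately show ?thesis by (simp add: abs_le_iff)
qed

lemma rate_eq: "G.rate = F.rate"
  using tendsto_div_unique_bounded_diff[OF F.ball_inf_div_tendsto_rate G.ball_inf_div_tendsto_rate
      ball_inf_bounded_diff] by simp

text \<open>Both minimizers nearly minimize \<open>f\<close> on \<open>B(x0,s)\<close>, up to \<open>2C\<close>, so strong convexity places them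
  within \<open>O(\<surd>s)\<close> of each other; along the geodesics from \<open>x0\<close> this shrinks to \<open>O(t/\<surd>s)\<close>.\<close>
lemma dist_ball_min_perturbation:
  assumes neg: "F.rate < 0" and s: "0 < s"
  shows "(dist (ball_min f x0 s) (ball_min g x0 s))\<^sup>2 \<le> 8 * C * s / (- F.rate)"
proof -
  have "(- F.rate) * (dist (ball_min f x0 s) (ball_min g x0 s))\<^sup>2
      \<le> 4 * s * (f (ball_min f x0 s) + f (ball_min g x0 s) - 2 * F.ball_inf s)"
    using F.ball_min(1)[of s] G.ball_min(1)[of s] s
    by (intro F.dist_sq_le_excess F.ball_inf_steep_rate) (use neg in auto)
  also have "\<dots> \<le> 4 * s * (2 * C)"
    using F.ball_min(2)[of s] G.ball_min(2)[of s] ball_inf_bounded_diff[of s]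
      bounded_diff[of "ball_min g x0 s"] s
    by (intro mult_left_mono) auto
  finally show ?thesis using neg by (simp add: field_simps)
qed

lemma gamma_s_dist_perturbation:
  assumes neg: "F.rate < 0" and s: "0 < s" and t: "0 \<le> t" "t \<le> s"
  shows "dist (gamma_s f x0 s t) (gamma_s g x0 s t) \<le> t * sqrt (8 * C / (- F.rate) / s)"
proof -
  have "dist (gamma_s f x0 s t) (gamma_s g x0 s t) \<le> t/s * dist (ball_min f x0 s) (ball_min g x0 s)"
    unfolding gamma_s_def
    using dist_geod_pt_le[OF F.hadamard F.dist_ball_min G.dist_ball_min s t] s by simp
  also have "\<dots> \<le> t/s * sqrt (8 * C * s / (- F.rate))"
    using dist_ball_min_perturbation[OF neg s] t s by (intro mult_left_mono real_le_rsqrt) auto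
  also have "sqrt (8 * C * s / (- F.rate)) = sqrt (s\<^sup>2 * (8 * C / (- F.rate) / s))"
    by (rule arg_cong[where f = sqrt]) (use s in \<open>simp add: power2_eq_square field_simps\<close>)
  also have "\<dots> = s * sqrt (8 * C / (- F.rate) / s)"
    by (simp only: real_sqrt_mult real_sqrt_abs) (use s in simp)
  finally show ?thesis using s by simp
qed

lemma gamma_s_same_limit:
  assumes neg: "F.rate < 0" and t: "0 \<le> t" and lim: "((\<lambda>s. gamma_s f x0 s t) \<longlongrightarrow> p) at_top"
  shows "((\<lambda>s. gamma_s g x0 s t) \<longlongrightarrow> p) at_top"
proof -
  define b where "b s = dist (gamma_s f x0 s t) p + t * sqrt (8 * C / (- F.rate) / s)" for s
  have "((\<lambda>s. 8 * C / (- F.rate) / s) \<longlongrightarrow> 0) at_top"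
    by (intro tendsto_divide_0[OF tendsto_const] filterlim_at_top_imp_at_infinity filterlim_ident)
  then have "((\<lambda>s. t * sqrt (8 * C / (- F.rate) / s)) \<longlongrightarrow> t * sqrt 0) at_top"
    by (rule tendsto_mult_left[OF tendsto_real_sqrt])
  with lim[THEN tendsto_dist_iff[THEN iffD1]] have "(b \<longlongrightarrow> 0 + t * sqrt 0) at_top"
    unfolding b_def by (rule tendsto_add)
  then have b: "(b \<longlongrightarrow> 0) at_top" by simp
  have "norm (dist (gamma_s g x0 s t) p) \<le> b s" if "t + 1 \<le> s" for s
    using gamma_s_dist_perturbation[OF neg, of s t] t that
      dist_triangle[of "gamma_s g x0 s t" p "gamma_s f x0 s t"] by (simp add: b_def dist_commute)
  then have "\<forall>\<^sub>F s in at_top. norm (dist (gamma_s g x0 s t) p) \<le> b s"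
    unfolding eventually_at_top_linorder by blast
  from Lim_null_comparison[OF this b] show ?thesis by (rule tendsto_dist_iff[THEN iffD2])
qed

end

theorem lemma4p7:
  fixes f g :: "'a::metric_space \<Rightarrow> real" and x0 :: 'a
  assumes "hadamard_space TYPE('a)"
    and "locally_compact_space TYPE('a)"
    and "continuous_on UNIV f" and "geod_convex f"
    and "\<not> bdd_below (range f)" and "decreases_linearly f x0"
    and "continuous_on UNIV g" and "geod_convex g"
    and "\<exists>C. \<forall>x. \<bar>f x - g x\<bar> \<le> C"
  shows "\<not> bdd_below (range g) \<and> decreases_linearly g x0
    \<and> (\<forall>t\<ge>0. \<exists>p. ((\<lambda>s. gamma_s f x0 s t) \<longlongrightarrow> p) at_top
                 \<and> ((\<lambda>s. gamma_s g x0 s t) \<longlongrightarrow> p) at_top)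
    \<and> (\<exists>a. ((\<lambda>s::real. - (INF x\<in>cball x0 s. f x) / s) \<longlongrightarrow> a) at_top
         \<and> ((\<lambda>s::real. - (INF x\<in>cball x0 s. g x) / s) \<longlongrightarrow> a) at_top)"
proof -
  obtain C where C: "\<And>x. \<bar>f x - g x\<bar> \<le> C" using assms(9) by blast
  have unbounded: "\<not> bdd_below (range g)" by (rule not_bdd_below_bounded_diff[OF assms(5) C])
  interpret bounded_perturbation f g x0 C
    by unfold_locales (use assms unbounded C in auto)
  have neg: "F.rate < 0" using assms(6) F.decreases_linearly_iff by simp
  have "\<exists>p. ((\<lambda>s. gamma_s f x0 s t) \<longlongrightarrow> p) at_top \<and> ((\<lambda>s. gamma_s g x0 s t) \<longlongrightarrow> p) at_top"
    if "0 \<le> t" for t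
    using F.gamma_s_convergent[OF neg that] gamma_s_same_limit[OF neg that] by blast
  moreover have "((\<lambda>s. - (INF x\<in>cball x0 s. f x) / s) \<longlongrightarrow> - F.rate) at_top"
    "((\<lambda>s. - (INF x\<in>cball x0 s. g x) / s) \<longlongrightarrow> - F.rate) at_top"
    using tendsto_minus[OF F.ball_inf_div_tendsto_rate] tendsto_minus[OF G.ball_inf_div_tendsto_rate]
    unfolding F.ball_inf_def G.ball_inf_def rate_eq minus_divide_left by simp_all
  ultimately show ?thesis
    using unbounded neg G.decreases_linearly_iff rate_eq by auto
qed

end
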